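(* Let $m$ be a positive integer, $r\geq 1$ and $\mathbf{p}=(p_1,\dots,p_m),\mathbf{q}=(q_1,\dots,q_m)\in[1,\infty]^m$. Suppose that either (a) $q_k\geq p_k$ for $k=1,\dots,m$ and $\frac1r-\left|\frac1{\mathbf{p}}\right|+\left|\frac1{\mathbf{q}}\right|>0$, or (b) $q_k\geq p_k$ for $k=2,\dots,m$, $q_1>p_1$, and $\frac1r-\left|\frac1{\mathbf{p}}\right|+\left|\frac1{\mathbf{q}}\right|\geq 0$. Define $\mathbf{s}=(s_1,\dots,s_m)$ by \[ \frac1{s_k}-\left|\frac1{\mathbf{q}}\right|_{\geq k}=\frac1r-\left|\frac1{\mathbf{p}}\right|_{\geq k},\qquad k=1,\dots,m, \] and assume $\mathbf{s}\in[1,\infty]^m$. Then for all Banach spaces $X_1,\dots,X_m,Y$ over $\mathbb{K}$, \[ \Pi^m_{(r;\mathbf{p})}(X_1,\dots,X_m;Y)\subset\Pi^m_{(\mathbf{s};\mathbf{q})}(X_1,\dots,X_m;Y), \] and the inclusion operator has norm $1$, i.e. $\pi_{(\mathbf{s};\mathbf{q})}(T)\le \pi_{(r;\mathbf{p})}(T)$ for every $T$ in the first space.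
   Context: $\mathbb{K}=\mathbb{R}$ or $\mathbb{C}$; $1/\infty:=0$. For $\mathbf{p}\in[1,\infty]^m$, $\left|\frac1{\mathbf{p}}\right|_{\geq k}:=\frac1{p_k}+\cdots+\frac1{p_m}$ and $\left|\frac1{\mathbf{p}}\right|:=\left|\frac1{\mathbf{p}}\right|_{\geq1}$. For a finite sequence $(x_j)_{j=1}^n$ in a Banach space $X$ and $p\in[1,\infty]$, $\|(x_j)_{j=1}^n\|_{w,p}:=\sup_{\varphi\in B_{X^*}}\|(\varphi(x_j))_{j=1}^n\|_{\ell_p}$. For $\mathbf{r}\in[1,\infty]^m$, $\mathbf{p}\in[1,\infty]^m$, a continuous $m$-linear map $T:X_1\times\cdots\times X_m\to Y$ is multiple $(\mathbf{r};\mathbf{p})$-summing if there is $C>0$ such that for all $n$ and all sequences $(x^{(k)}_j)_{j=1}^n\subset X_k$, \[ \left(\sum_{j_1=1}^n\left(\cdots\left(\sum_{j_m=1}^n\|T(x^{(1)}_{j_1},\dots,x^{(m)}_{j_m})\|^{r_m}\right)^{\frac{r_{m-1}}{r_m}}\cdots\right)^{\frac{r_1}{r_2}}\right)^{\frac1{r_1}}\le C\prod_{k=1}^m\|(x^{(k)}_j)_{j=1}^n\|_{w,p_k}, \] where any sum with exponent $\infty$ is replaced by a supremum. The space of such maps is $\Pi^m_{(\mathbf{r};\mathbf{p})}(X_1,\dots,X_m;Y)$, with norm $\pi_{(\mathbf{r};\mathbf{p})}(T)$ equal to the infimum of such $C$; when $r_1=\cdots=r_m=r$ one writes $(r;\mathbf{p})$.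 *)

theory Defs
  imports "HOL-Analysis.Analysis"
begin

text \<open>Exponents in [1,\<infinity>] are extended reals; 1/\<infinity> := 0.\<close>
definition einv :: "ereal \<Rightarrow> real" where
  "einv p = (if p = \<infinity> then 0 else 1 / real_of_ereal p)"

definition invsum_from :: "(nat \<Rightarrow> ereal) \<Rightarrow> nat \<Rightarrow> nat \<Rightarrow> real" where
  "invsum_from p m k = (\<Sum>i=k..m. einv (p i))"

definition lpnorm :: "ereal \<Rightarrow> nat \<Rightarrow> (nat \<Rightarrow> real) \<Rightarrow> real" where
  "lpnorm p n a = (if p = \<infinity> then Max (insert 0 ((\<lambda>j. \<bar>a j\<bar>) ` {1..n}))
      else (\<Sum>j=1..n. \<bar>a j\<bar> powr real_of_ereal p) powr (1 / real_of_ereal p))"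

text \<open>A normed \<bbbK>-space structure on a real Banach type is given by a scalar action
  sm (only its values on \<bbbK> matter), compatible with the real structure.\<close>
definition is_scalar_field :: "complex set \<Rightarrow> bool" where
  "is_scalar_field K \<longleftrightarrow> K = \<real> \<or> K = UNIV"

definition K_space :: "complex set \<Rightarrow> (complex \<Rightarrow> 'a::real_normed_vector \<Rightarrow> 'a) \<Rightarrow> bool" where
  "K_space K sm \<longleftrightarrow>
     (\<forall>c\<in>K. \<forall>x y. sm c (x + y) = sm c x + sm c y) \<and>
     (\<forall>c\<in>K. \<forall>d\<in>K. \<forall>x. sm (c + d) x = sm c x + sm d x) \<and>
     (\<forall>c\<in>K. \<forall>d\<in>K. \<forall>x. sm (c * d) x = sm c (sm d x)) \<and>
     (\<forall>a::real. \<forall>x. sm (complex_of_real a) x = a *\<^sub>R x) \<and>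
     (\<forall>c\<in>K. \<forall>x. norm (sm c x) = cmod c * norm x)"

text \<open>A Banach space over \<bbbK>: a closed \<bbbK>-linear subspace of a real Banach type.\<close>
definition K_banach_subspace ::
  "complex set \<Rightarrow> (complex \<Rightarrow> 'a::banach \<Rightarrow> 'a) \<Rightarrow> 'a set \<Rightarrow> bool" where
  "K_banach_subspace K sm V \<longleftrightarrow> 0 \<in> V \<and> (\<forall>x\<in>V. \<forall>y\<in>V. x + y \<in> V) \<and>
     (\<forall>c\<in>K. \<forall>x\<in>V. sm c x \<in> V) \<and> closed V"

definition dual_ball ::
  "complex set \<Rightarrow> (complex \<Rightarrow> 'a::real_normed_vector \<Rightarrow> 'a) \<Rightarrow> 'a set \<Rightarrow> ('a \<Rightarrow> complex) set" where
  "dual_ball K sm V = {\<phi>. (\<forall>x\<in>V. \<phi> x \<in> K) \<and>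
     (\<forall>x\<in>V. \<forall>y\<in>V. \<phi> (x + y) = \<phi> x + \<phi> y) \<and>
     (\<forall>c\<in>K. \<forall>x\<in>V. \<phi> (sm c x) = c * \<phi> x) \<and>
     (\<forall>x\<in>V. cmod (\<phi> x) \<le> norm x)}"

definition wnorm ::
  "complex set \<Rightarrow> (complex \<Rightarrow> 'a::real_normed_vector \<Rightarrow> 'a) \<Rightarrow> 'a set \<Rightarrow> ereal \<Rightarrow> nat \<Rightarrow> (nat \<Rightarrow> 'a) \<Rightarrow> real" where
  "wnorm K sm V p n x = Sup ((\<lambda>\<phi>. lpnorm p n (\<lambda>j. cmod (\<phi> (x j)))) ` dual_ball K sm V)"

definition multilinear_on ::
  "complex set \<Rightarrow> (complex \<Rightarrow> 'a::real_normed_vector \<Rightarrow> 'a) \<Rightarrow> (complex \<Rightarrow> 'b::real_normed_vector \<Rightarrow> 'b)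
   \<Rightarrow> nat \<Rightarrow> (nat \<Rightarrow> 'a set) \<Rightarrow> ((nat \<Rightarrow> 'a) \<Rightarrow> 'b) \<Rightarrow> bool" where
  "multilinear_on K smX smY m V T \<longleftrightarrow>
     (\<forall>x\<in>PiE {1..m} V. \<forall>k\<in>{1..m}. \<forall>y\<in>V k.
        T (x(k := x k + y)) = T x + T (x(k := y))) \<and>
     (\<forall>x\<in>PiE {1..m} V. \<forall>k\<in>{1..m}. \<forall>c\<in>K.
        T (x(k := smX c (x k))) = smY c (T x))"

definition cont_multilinear ::
  "complex set \<Rightarrow> (complex \<Rightarrow> 'a::real_normed_vector \<Rightarrow> 'a) \<Rightarrow> (complex \<Rightarrow> 'b::real_normed_vector \<Rightarrow> 'b)
   \<Rightarrow> nat \<Rightarrow> (nat \<Rightarrow> 'a set) \<Rightarrow> ((nat \<Rightarrow> 'a) \<Rightarrow> 'b) \<Rightarrow> bool" where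
  "cont_multilinear K smX smY m V T \<longleftrightarrow>
     multilinear_on K smX smY m V T \<and> continuous_on (PiE {1..m} V) T"

text \<open>Iterated mixed norm: mixnorm r n m d F J applies the \<ell>_{r_k}-norms for the
  last d levels k = m-d+1, ..., m (innermost k = m), with indices j_1..j_{m-d} fixed in J.
  mixnorm r n m m F J is the left-hand side of the multiple summing inequality.\<close>
fun mixnorm :: "(nat \<Rightarrow> ereal) \<Rightarrow> nat \<Rightarrow> nat \<Rightarrow> nat \<Rightarrow> ((nat \<Rightarrow> nat) \<Rightarrow> real) \<Rightarrow> (nat \<Rightarrow> nat) \<Rightarrow> real" where
  "mixnorm r n m 0 F J = F J"
| "mixnorm r n m (Suc d) F J =
     lpnorm (r (m - d)) n (\<lambda>j. mixnorm r n m d F (J(m - d := j)))"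

definition summing_consts ::
  "complex set \<Rightarrow> (complex \<Rightarrow> 'a::real_normed_vector \<Rightarrow> 'a) \<Rightarrow> nat \<Rightarrow> (nat \<Rightarrow> 'a set)
   \<Rightarrow> (nat \<Rightarrow> ereal) \<Rightarrow> (nat \<Rightarrow> ereal) \<Rightarrow> ((nat \<Rightarrow> 'a) \<Rightarrow> 'b::real_normed_vector) \<Rightarrow> real set" where
  "summing_consts K smX m V r p T = {C. C > 0 \<and>
     (\<forall>n. \<forall>x::nat \<Rightarrow> nat \<Rightarrow> 'a. (\<forall>k\<in>{1..m}. \<forall>j\<in>{1..n}. x k j \<in> V k) \<longrightarrow>
        mixnorm r n m m (\<lambda>J. norm (T (\<lambda>k\<in>{1..m}. x k (J k)))) (\<lambda>_. 0)
          \<le> C * (\<Prod>k=1..m. wnorm K smX (V k) (p k) n (x k)))}"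

definition multiple_summing ::
  "complex set \<Rightarrow> (complex \<Rightarrow> 'a::real_normed_vector \<Rightarrow> 'a) \<Rightarrow> (complex \<Rightarrow> 'b::real_normed_vector \<Rightarrow> 'b)
   \<Rightarrow> nat \<Rightarrow> (nat \<Rightarrow> 'a set) \<Rightarrow> (nat \<Rightarrow> ereal) \<Rightarrow> (nat \<Rightarrow> ereal) \<Rightarrow> ((nat \<Rightarrow> 'a) \<Rightarrow> 'b) \<Rightarrow> bool" where
  "multiple_summing K smX smY m V r p T \<longleftrightarrow>
     cont_multilinear K smX smY m V T \<and> summing_consts K smX m V r p T \<noteq> {}"

definition pi_norm ::
  "complex set \<Rightarrow> (complex \<Rightarrow> 'a::real_normed_vector \<Rightarrow> 'a) \<Rightarrow> nat \<Rightarrow> (nat \<Rightarrow> 'a set)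
   \<Rightarrow> (nat \<Rightarrow> ereal) \<Rightarrow> (nat \<Rightarrow> ereal) \<Rightarrow> ((nat \<Rightarrow> 'a) \<Rightarrow> 'b::real_normed_vector) \<Rightarrow> real" where
  "pi_norm K smX m V r p T = Inf (summing_consts K smX m V r p T)"

end

theory Submission
  imports Defs
begin

text \<open>
  Put 1/t_k = 1/p_k - 1/q_k, so that 1/s_k = 1/s_(k+1) - 1/t_k with s_(m+1) = r.
  Multiplying the vectors x^(k) by nonnegative weights \<lambda>_k and applying Hoelder's
  inequality to their weak norms turns the (r;p)-summing inequality into a weighted
  \<ell>_r-bound with right-hand side C \<Prod>_k \<parallel>\<lambda>_k\<parallel>_(t_k) \<parallel>x^(k)\<parallel>_(w,q_k).
  The weights are then removed from the last one to the first: by the duality of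
  \<ell>_s and \<ell>_t (reverse Hoelder), a bound for all weights \<lambda>_k at exponent s_(k+1) is a
  bound without \<lambda>_k at exponent s_k. The outer levels 1, ..., k-1 carry the common
  exponent s_(k+1) before and s_k \<ge> s_(k+1) after this step, and \<ell>_(s_(k+1)) embeds
  contractively into \<ell>_(s_k). Hypothesis (a) or (b) guarantees s_k < \<infinity> for k \<ge> 2,
  which is what lets the outer levels flatten into a single sum.
\<close>

subsection \<open>Reciprocals of exponents\<close>

lemma ereal_ge1_cases:
  assumes "p \<ge> (1::ereal)"
  obtains "p = \<infinity>" | s where "p = ereal s" "s \<ge> 1"
  using assms by (cases p) auto

lemma einv_infinity [simp]: "einv \<infinity> = 0"
  by (simp add: einv_def)

lemma einv_ereal [simp]: "einv (ereal s) = 1 / s"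
  by (simp add: einv_def)

lemma einv_nonneg: "p \<ge> 1 \<Longrightarrow> einv p \<ge> 0"
  by (cases rule: ereal_ge1_cases) auto

lemma einv_le_1: "p \<ge> 1 \<Longrightarrow> einv p \<le> 1"
  by (cases rule: ereal_ge1_cases) auto

lemma einv_inject: "p \<ge> 1 \<Longrightarrow> q \<ge> 1 \<Longrightarrow> einv p = einv q \<Longrightarrow> p = q"
  by (cases p rule: ereal_ge1_cases; cases q rule: ereal_ge1_cases) auto

lemma einv_antimono:
  assumes "p \<ge> 1" "q \<ge> p"
  shows "einv q \<le> einv p"
proof -
  have "q \<ge> 1" using assms by (metis order.trans)
  show ?thesis
    by (rule ereal_ge1_cases[OF assms(1)]; rule ereal_ge1_cases[OF \<open>q \<ge> 1\<close>])
      (use assms in \<open>auto simp: frac_le\<close>)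
qed

lemma einv_strict_antimono:
  assumes "p \<ge> 1" "q > p"
  shows "einv q < einv p"
proof -
  have "q \<ge> 1" using assms by (metis order.strict_implies_order order.trans)
  show ?thesis
    by (rule ereal_ge1_cases[OF assms(1)]; rule ereal_ge1_cases[OF \<open>q \<ge> 1\<close>])
      (use assms in \<open>auto simp: frac_less2\<close>)
qed

lemma einv_gap:
  assumes "p \<ge> 1" "q \<ge> p"
  obtains t where "t \<ge> 1" "einv p = einv t + einv q"
proof -
  define d where "d = einv p - einv q"
  have "q \<ge> 1" using assms by (metis order.trans)
  then have "0 \<le> d" "d \<le> 1"
    using einv_antimono[OF assms] einv_le_1[OF assms(1)] einv_nonneg[of q] by (auto simp: d_def)
  then have "(if d = 0 then \<infinity> else ereal (1 / d)) \<ge> 1 \<and>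
      einv p = einv (if d = 0 then \<infinity> else ereal (1 / d)) + einv q"
    by (auto simp: d_def)
  then show ?thesis using that by blast
qed

subsection \<open>Finite \<open>\<ell>_p\<close>-norms\<close>

lemma lpnorm_ereal: "lpnorm (ereal s) n a = (\<Sum>j=1..n. \<bar>a j\<bar> powr s) powr (1/s)"
  by (simp add: lpnorm_def)

lemma lpnorm_infinity: "lpnorm \<infinity> n a = Max (insert 0 ((\<lambda>j. \<bar>a j\<bar>) ` {1..n}))"
  by (simp add: lpnorm_def)

lemma lpnorm_nonneg: "0 \<le> lpnorm p n a"
  unfolding lpnorm_def by (auto intro: Max_ge)

lemma lpnorm_infinity_upper: "j \<in> {1..n} \<Longrightarrow> \<bar>a j\<bar> \<le> lpnorm \<infinity> n a"
  unfolding lpnorm_infinity by (rule Max_ge) auto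

lemma lpnorm_infinity_least: "0 \<le> M \<Longrightarrow> \<forall>j\<in>{1..n}. \<bar>a j\<bar> \<le> M \<Longrightarrow> lpnorm \<infinity> n a \<le> M"
  unfolding lpnorm_infinity by (subst Max_le_iff) auto

lemma lpnorm_powr:
  assumes "\<sigma> > 0" "\<forall>j. 0 \<le> a j"
  shows "lpnorm (ereal \<sigma>) n a powr \<sigma> = (\<Sum>j=1..n. a j powr \<sigma>)"
  using assms by (simp add: lpnorm_ereal powr_powr sum_nonneg)

lemma lpnorm_cong: "\<forall>j\<in>{1..n}. \<bar>a j\<bar> = \<bar>b j\<bar> \<Longrightarrow> lpnorm p n a = lpnorm p n b"
  unfolding lpnorm_def by (auto intro!: sum.cong arg_cong[where f=Max] image_cong)

lemma lpnorm_mono: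
  assumes p: "p \<ge> 1" and le: "\<forall>j\<in>{1..n}. \<bar>a j\<bar> \<le> \<bar>b j\<bar>"
  shows "lpnorm p n a \<le> lpnorm p n b"
  using p
proof (cases rule: ereal_ge1_cases)
  case 1
  then show ?thesis using le
    by (metis lpnorm_infinity_upper lpnorm_infinity_least lpnorm_nonneg order.trans)
next
  case (2 s)
  have "(\<Sum>j=1..n. \<bar>a j\<bar> powr s) \<le> (\<Sum>j=1..n. \<bar>b j\<bar> powr s)"
    using le 2 by (intro sum_mono powr_mono2) auto
  then show ?thesis using 2
    by (simp add: lpnorm_ereal powr_mono2 sum_nonneg)
qed

lemma lpnorm_scale:
  assumes p: "p \<ge> 1"
  shows "lpnorm p n (\<lambda>j. c * a j) = \<bar>c\<bar> * lpnorm p n a"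
  using p
proof (cases rule: ereal_ge1_cases)
  case 1
  show ?thesis
  proof (rule antisym)
    show "lpnorm p n (\<lambda>j. c * a j) \<le> \<bar>c\<bar> * lpnorm p n a"
      unfolding 1 by (rule lpnorm_infinity_least)
        (auto simp: abs_mult lpnorm_nonneg intro!: mult_left_mono lpnorm_infinity_upper)
    show "\<bar>c\<bar> * lpnorm p n a \<le> lpnorm p n (\<lambda>j. c * a j)"
    proof (cases "c = 0")
      case True
      then show ?thesis by (simp add: lpnorm_nonneg)
    next
      case False
      have "\<bar>a j\<bar> \<le> lpnorm \<infinity> n (\<lambda>j. c * a j) / \<bar>c\<bar>" if "j \<in> {1..n}" for j
        using lpnorm_infinity_upper[OF that, of "\<lambda>j. c * a j"] False
        by (simp add: abs_mult pos_le_divide_eq mult.commute)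
      then have "lpnorm \<infinity> n a \<le> lpnorm \<infinity> n (\<lambda>j. c * a j) / \<bar>c\<bar>"
        by (intro lpnorm_infinity_least) (auto simp: lpnorm_nonneg)
      then show ?thesis using False 1 by (simp add: pos_le_divide_eq mult.commute)
    qed
  qed
next
  case (2 s)
  have "(\<Sum>j=1..n. \<bar>c * a j\<bar> powr s) = \<bar>c\<bar> powr s * (\<Sum>j=1..n. \<bar>a j\<bar> powr s)"
    by (simp add: abs_mult powr_mult sum_distrib_left)
  then show ?thesis using 2
    by (simp add: lpnorm_ereal powr_mult sum_nonneg powr_powr)
qed

lemma lpnorm_indicator:
  assumes "t \<ge> 1" "j \<in> {1..n}"
  shows "lpnorm t n (\<lambda>i. if i = j then 1 else 0) = 1"
  using assms(1)
proof (cases rule: ereal_ge1_cases)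
  case 1
  have "lpnorm \<infinity> n (\<lambda>i. if i = j then 1 else 0) \<le> 1"
    by (rule lpnorm_infinity_least) auto
  moreover have "1 \<le> lpnorm \<infinity> n (\<lambda>i. if i = j then 1 else 0::real)"
    using lpnorm_infinity_upper[OF assms(2), of "\<lambda>i. if i = j then 1 else 0::real"] by simp
  ultimately show ?thesis using 1 by simp
next
  case (2 s)
  have "(\<Sum>i=1..n. \<bar>if i = j then 1 else 0::real\<bar> powr s) = (\<Sum>i=1..n. if i = j then 1 else 0)"
    by (intro sum.cong) auto
  also have "\<dots> = 1" using assms(2) by simp
  finally show ?thesis using 2 by (simp add: lpnorm_ereal)
qed

lemma sum_powr_holder:
  fixes u v :: "'a \<Rightarrow> real"
  assumes A: "finite A" and ab: "0 \<le> \<alpha>" "0 \<le> \<beta>" "\<alpha> + \<beta> = 1"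
    and u: "\<forall>i\<in>A. 0 \<le> u i" and v: "\<forall>i\<in>A. 0 \<le> v i"
  shows "(\<Sum>i\<in>A. u i powr \<alpha> * v i powr \<beta>) \<le> (\<Sum>i\<in>A. u i) powr \<alpha> * (\<Sum>i\<in>A. v i) powr \<beta>"
proof -
  define U where "U = (\<Sum>i\<in>A. u i)"
  define W where "W = (\<Sum>i\<in>A. v i)"
  have "U \<ge> 0" "W \<ge> 0" unfolding U_def W_def using u v by (simp_all add: sum_nonneg)
  show ?thesis
  proof (cases "U = 0 \<or> W = 0")
    case True
    then have "\<forall>i\<in>A. u i powr \<alpha> * v i powr \<beta> = 0"
      using u v A by (auto simp: U_def W_def sum_nonneg_eq_0_iff)
    then have "(\<Sum>i\<in>A. u i powr \<alpha> * v i powr \<beta>) = 0" by (auto intro!: sum.neutral)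
    then show ?thesis by simp
  next
    case False
    with \<open>U \<ge> 0\<close> \<open>W \<ge> 0\<close> have Up: "U > 0" "W > 0" by auto
    have "(u i / U) powr \<alpha> * (v i / W) powr \<beta> \<le> \<alpha> * (u i / U) + \<beta> * (v i / W)" if "i \<in> A" for i
    proof (cases "u i = 0 \<or> v i = 0")
      case False
      then have "u i / U > 0" "v i / W > 0" using u v that Up by (auto simp: order_less_le)
      then show ?thesis by (rule Youngs_inequality_0[OF ab])
    qed (use u v that Up ab in auto)
    then have "(\<Sum>i\<in>A. (u i / U) powr \<alpha> * (v i / W) powr \<beta>)
        \<le> (\<Sum>i\<in>A. \<alpha> * (u i / U) + \<beta> * (v i / W))"
      by (intro sum_mono) blast
    also have "\<dots> = \<alpha> * (\<Sum>i\<in>A. u i) / U + \<beta> * (\<Sum>i\<in>A. v i) / W"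
      by (simp add: sum.distrib sum_distrib_left sum_divide_distrib)
    also have "\<dots> = 1"
      using Up ab by (simp add: U_def[symmetric] W_def[symmetric])
    also have "(\<Sum>i\<in>A. (u i / U) powr \<alpha> * (v i / W) powr \<beta>)
        = (\<Sum>i\<in>A. u i powr \<alpha> * v i powr \<beta>) / (U powr \<alpha> * W powr \<beta>)"
      using u v Up by (simp add: powr_divide sum_divide_distrib)
    finally show ?thesis
      using Up by (simp add: divide_le_eq U_def W_def)
  qed
qed

lemma lpnorm_holder:
  assumes p: "p \<ge> 1" and t: "t \<ge> 1" and q: "q \<ge> 1"
    and e: "einv p = einv t + einv q"
  shows "lpnorm p n (\<lambda>j. f j * g j) \<le> lpnorm t n f * lpnorm q n g"
proof (cases "t = \<infinity> \<or> q = \<infinity>")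
  case True
  then consider "t = \<infinity>" "q = p" | "q = \<infinity>" "t = p"
    using e einv_inject p t q by fastforce
  then show ?thesis
  proof cases
    case 1
    have "lpnorm p n (\<lambda>j. f j * g j) \<le> lpnorm p n (\<lambda>j. lpnorm t n f * g j)"
      using p 1 by (intro lpnorm_mono)
        (auto simp: abs_mult lpnorm_nonneg intro!: mult_right_mono lpnorm_infinity_upper)
    then show ?thesis using p 1 by (simp add: lpnorm_scale lpnorm_nonneg)
  next
    case 2
    have "lpnorm p n (\<lambda>j. f j * g j) \<le> lpnorm p n (\<lambda>j. lpnorm q n g * f j)"
      using p 2 by (intro lpnorm_mono)
        (auto simp: abs_mult lpnorm_nonneg mult.commute intro!: mult_left_mono lpnorm_infinity_upper)
    also have "\<dots> = lpnorm q n g * lpnorm t n f"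
      using p 2 by (simp add: lpnorm_scale lpnorm_nonneg)
    finally show ?thesis by (simp add: mult.commute)
  qed
next
  case False
  then obtain a b where a: "t = ereal a" "a \<ge> 1" and b: "q = ereal b" "b \<ge> 1"
    using t q by (metis ereal_ge1_cases)
  have "0 < 1 / a + 1 / b"
    using a b by (simp add: add_pos_pos)
  then have "p \<noteq> \<infinity>"
    using e a b by auto
  with p obtain s where s: "p = ereal s" "s \<ge> 1"
    by (cases rule: ereal_ge1_cases) auto
  have "1 / s = 1 / a + 1 / b"
    using e a b s by simp
  then have "s / a + s / b = 1"
    using s by (simp add: field_simps)
  have "(\<Sum>j=1..n. \<bar>f j * g j\<bar> powr s)
      = (\<Sum>j=1..n. (\<bar>f j\<bar> powr a) powr (s/a) * (\<bar>g j\<bar> powr b) powr (s/b))"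
    using a b by (simp add: powr_powr abs_mult powr_mult)
  also have "\<dots> \<le> (\<Sum>j=1..n. \<bar>f j\<bar> powr a) powr (s/a) * (\<Sum>j=1..n. \<bar>g j\<bar> powr b) powr (s/b)"
    using s a b \<open>s / a + s / b = 1\<close> by (intro sum_powr_holder) auto
  finally have "(\<Sum>j=1..n. \<bar>f j * g j\<bar> powr s) powr (1/s)
      \<le> ((\<Sum>j=1..n. \<bar>f j\<bar> powr a) powr (s/a) * (\<Sum>j=1..n. \<bar>g j\<bar> powr b) powr (s/b)) powr (1/s)"
    using s by (intro powr_mono2) (auto intro: sum_nonneg)
  also have "\<dots> = lpnorm t n f * lpnorm q n g"
    using s a b by (simp add: lpnorm_ereal powr_mult powr_powr sum_nonneg)
  finally show ?thesis using s by (simp add: lpnorm_ereal)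
qed

text \<open>Reverse Hoelder; the extremal weight is \<open>\<mu> = G powr (\<sigma>/\<tau>)\<close>.\<close>
lemma lpnorm_ereal_le_by_duality:
  assumes a: "a \<ge> 1" and \<sigma>: "\<sigma> \<ge> 1" and \<tau>: "\<tau> \<ge> 1" and e: "1 / a = 1 / \<sigma> + 1 / \<tau>"
    and G: "\<forall>j\<in>{1..n}. 0 \<le> G j" and B: "B \<ge> 0"
    and hyp: "\<And>\<mu>. \<forall>j. 0 \<le> \<mu> j \<Longrightarrow> lpnorm (ereal a) n (\<lambda>j. \<mu> j * G j) \<le> B * lpnorm (ereal \<tau>) n \<mu>"
  shows "lpnorm (ereal \<sigma>) n G \<le> B"
proof -
  have key: "(\<sigma>/\<tau> + 1) * a = \<sigma>"
    using e a \<sigma> \<tau> by (simp add: field_simps)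
  define \<mu> where "\<mu> = (\<lambda>j. G j powr (\<sigma>/\<tau>))"
  define S where "S = (\<Sum>j=1..n. \<bar>G j\<bar> powr \<sigma>)"
  have "\<bar>\<mu> j * G j\<bar> powr a = \<bar>G j\<bar> powr \<sigma>" if "j \<in> {1..n}" for j
  proof (cases "G j = 0")
    case True
    then show ?thesis using \<sigma> a by (simp add: \<mu>_def)
  next
    case False
    then have "G j > 0" using G that by force
    then have "\<mu> j * G j = G j powr (\<sigma>/\<tau> + 1)" by (simp add: \<mu>_def powr_add)
    then show ?thesis using key \<open>G j > 0\<close> by (simp add: powr_powr)
  qed
  then have L: "lpnorm (ereal a) n (\<lambda>j. \<mu> j * G j) = S powr (1/a)"
    by (simp add: lpnorm_ereal S_def)
  have "\<bar>\<mu> j\<bar> powr \<tau> = \<bar>G j\<bar> powr \<sigma>" if "j \<in> {1..n}" for j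
    using G that \<tau> by (simp add: \<mu>_def powr_powr)
  then have R: "lpnorm (ereal \<tau>) n \<mu> = S powr (1/\<tau>)"
    by (simp add: lpnorm_ereal S_def)
  have "S powr (1/\<sigma>) \<le> B"
  proof (cases "S = 0")
    case False
    then have "S > 0" by (simp add: S_def sum_nonneg order_less_le)
    have "S powr (1/\<sigma>) * S powr (1/\<tau>) = S powr (1/a)"
      using e by (simp add: powr_add[symmetric])
    also have "\<dots> \<le> B * S powr (1/\<tau>)"
      using hyp[of \<mu>] L R G by (simp add: \<mu>_def)
    finally show ?thesis using \<open>S > 0\<close> by simp
  qed (use B in simp)
  then show ?thesis by (simp add: lpnorm_ereal S_def)
qed

lemma lpnorm_le_by_duality:
  assumes a: "a \<ge> 1" and s: "s \<ge> 1" and t: "t \<ge> 1"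
    and e: "1 / a = einv s + einv t"
    and G: "\<forall>j\<in>{1..n}. 0 \<le> G j" and B: "B \<ge> 0"
    and hyp: "\<And>\<mu>. \<forall>j. 0 \<le> \<mu> j \<Longrightarrow> lpnorm (ereal a) n (\<lambda>j. \<mu> j * G j) \<le> B * lpnorm t n \<mu>"
  shows "lpnorm s n G \<le> B"
  using s
proof (cases rule: ereal_ge1_cases)
  case 1
  have "\<bar>G j\<bar> \<le> B" if j: "j \<in> {1..n}" for j
  proof -
    define \<mu> where "\<mu> = (\<lambda>i. if i = j then 1 else 0::real)"
    have "lpnorm (ereal a) n (\<lambda>i. \<mu> i * G i)
        = (\<Sum>i=1..n. if i = j then \<bar>G j\<bar> powr a else 0) powr (1/a)"
      unfolding lpnorm_ereal \<mu>_def by (intro arg_cong2[where f="(powr)"] sum.cong) auto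
    also have "\<dots> = \<bar>G j\<bar>" using j a by (simp add: powr_powr)
    finally show ?thesis
      using hyp[of \<mu>] lpnorm_indicator[OF t j] by (simp add: \<mu>_def)
  qed
  then show ?thesis unfolding 1 by (intro lpnorm_infinity_least B) blast
next
  case (2 \<sigma>)
  show ?thesis
  proof (cases "t = \<infinity>")
    case True
    then have "a = \<sigma>" using e 2 a by (simp add: field_simps)
    have "lpnorm (ereal a) n (\<lambda>j. 1 * G j) \<le> B * lpnorm t n (\<lambda>_. 1)" by (rule hyp) simp
    also have "\<dots> \<le> B * 1"
      using True by (intro mult_left_mono B) (simp add: lpnorm_infinity_least)
    finally show ?thesis using 2 \<open>a = \<sigma>\<close> by simp
  next
    case False
    obtain \<tau> where "t = ereal \<tau>" "\<tau> \<ge> 1" using t False by (cases rule: ereal_ge1_cases) auto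
    then show ?thesis
      using lpnorm_ereal_le_by_duality[OF a \<open>\<sigma> \<ge> 1\<close> _ _ G B] e hyp 2 by simp
  qed
qed

lemma sum_powr_root_antimono:
  fixes w :: "'a \<Rightarrow> real"
  assumes A: "finite A" and bc: "0 < b" "b \<le> c" and w: "\<forall>i\<in>A. 0 \<le> w i"
  shows "(\<Sum>i\<in>A. w i powr c) powr (1/c) \<le> (\<Sum>i\<in>A. w i powr b) powr (1/b)"
proof -
  define N where "N = (\<Sum>i\<in>A. w i powr b) powr (1/b)"
  have SN: "(\<Sum>i\<in>A. w i powr b) = N powr b"
    using bc by (simp add: N_def powr_powr sum_nonneg)
  show ?thesis
  proof (cases "N = 0")
    case True
    then have "\<forall>i\<in>A. w i powr b = 0" using SN A by (simp add: sum_nonneg_eq_0_iff)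
    then show ?thesis by (simp add: N_def[symmetric] True)
  next
    case False
    then have Np: "N > 0" by (simp add: N_def)
    have wle: "w i \<le> N" if i: "i \<in> A" for i
    proof -
      have "w i powr b \<le> N powr b"
        using A i SN by (metis member_le_sum powr_ge_zero)
      then show ?thesis using powr_less_mono2[of b N "w i"] bc w i Np by force
    qed
    have "(\<Sum>i\<in>A. w i powr c) / N powr c = (\<Sum>i\<in>A. (w i / N) powr c)"
      using w Np by (simp add: powr_divide sum_divide_distrib)
    also have "\<dots> \<le> (\<Sum>i\<in>A. (w i / N) powr b)"
      using wle w Np bc by (intro sum_mono powr_mono') auto
    also have "\<dots> = (\<Sum>i\<in>A. w i powr b) / N powr b"
      using w Np by (simp add: powr_divide sum_divide_distrib)
    also have "\<dots> = 1" using SN Np by simp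
    finally have "(\<Sum>i\<in>A. w i powr c) powr (1/c) \<le> (N powr c) powr (1/c)"
      using bc Np by (intro powr_mono2) (auto intro: sum_nonneg simp: divide_le_eq)
    then show ?thesis using bc Np by (simp add: powr_powr N_def[symmetric])
  qed
qed

text \<open>Duality after flattening the outer levels into a sum over \<open>P\<close>;
  \<open>\<sigma>' \<le> \<sigma>\<close> lets the outer \<open>\<ell>_\<sigma>\<close>-norm be bounded by the \<open>\<ell>_\<sigma>'\<close>-norm.\<close>
lemma flattened_le_by_duality:
  fixes V :: "nat \<Rightarrow> 'i \<Rightarrow> real"
  assumes P: "finite P" and V: "\<forall>j J. 0 \<le> V j J"
    and \<sigma>: "1 \<le> \<sigma>'" "\<sigma>' \<le> \<sigma>" and t: "t \<ge> 1" and B: "B \<ge> 0"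
    and e: "1 / \<sigma>' = 1 / \<sigma> + einv t"
    and hyp: "\<And>\<mu>. \<forall>j. 0 \<le> \<mu> j \<Longrightarrow>
      (\<Sum>J\<in>P. \<Sum>j=1..n. (\<mu> j * V j J) powr \<sigma>') powr (1/\<sigma>') \<le> B * lpnorm t n \<mu>"
  shows "(\<Sum>J\<in>P. \<Sum>j=1..n. V j J powr \<sigma>) powr (1/\<sigma>) \<le> B"
proof -
  define G where "G = (\<lambda>j. (\<Sum>J\<in>P. V j J powr \<sigma>') powr (1/\<sigma>'))"
  define H where "H = (\<lambda>j. (\<Sum>J\<in>P. V j J powr \<sigma>) powr (1/\<sigma>))"
  have G0: "\<forall>j. 0 \<le> G j" and H0: "\<forall>j. 0 \<le> H j" by (simp_all add: G_def H_def)
  have "lpnorm (ereal \<sigma>) n G \<le> B"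
  proof (rule lpnorm_le_by_duality[of \<sigma>' _ t])
    fix \<mu> :: "nat \<Rightarrow> real" assume \<mu>: "\<forall>j. 0 \<le> \<mu> j"
    have "(\<Sum>J\<in>P. (\<mu> j * V j J) powr \<sigma>') = (\<mu> j * G j) powr \<sigma>'" for j
    proof -
      have "G j powr \<sigma>' = (\<Sum>J\<in>P. V j J powr \<sigma>')"
        using \<sigma> by (simp add: G_def powr_powr sum_nonneg)
      then show ?thesis
        using \<mu> V G0 by (simp add: powr_mult sum_distrib_left)
    qed
    then have "(\<Sum>J\<in>P. \<Sum>j=1..n. (\<mu> j * V j J) powr \<sigma>') = (\<Sum>j=1..n. (\<mu> j * G j) powr \<sigma>')"
      by (subst sum.swap) simp
    then show "lpnorm (ereal \<sigma>') n (\<lambda>j. \<mu> j * G j) \<le> B * lpnorm t n \<mu>"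
      using hyp[OF \<mu>] \<mu> G0 by (simp add: lpnorm_ereal)
  qed (use \<sigma> t e B G0 in auto)
  moreover have "lpnorm (ereal \<sigma>) n H \<le> lpnorm (ereal \<sigma>) n G"
    using H0 G0 sum_powr_root_antimono[OF P, of \<sigma>' \<sigma>] \<sigma> V
    by (intro lpnorm_mono) (auto simp: H_def G_def)
  moreover have "(\<Sum>J\<in>P. \<Sum>j=1..n. V j J powr \<sigma>) = (\<Sum>j=1..n. H j powr \<sigma>)"
    using \<sigma> V by (subst sum.swap) (intro sum.cong refl; simp add: H_def powr_powr sum_nonneg)
  ultimately show ?thesis
    using \<sigma> H0 by (simp add: lpnorm_ereal)
qed

subsection \<open>Mixed norms\<close>

lemma mixnorm_nonneg: "\<forall>J. 0 \<le> F J \<Longrightarrow> 0 \<le> mixnorm r n m d F J"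
  by (cases d) (auto simp: lpnorm_nonneg)

lemma mixnorm_cong_exponents:
  "d \<le> m \<Longrightarrow> \<forall>l. m - d < l \<and> l \<le> m \<longrightarrow> r l = r' l \<Longrightarrow> mixnorm r n m d F J = mixnorm r' n m d F J"
proof (induction d arbitrary: J)
  case (Suc d)
  then have "r (m - d) = r' (m - d)" by auto
  moreover have "mixnorm r n m d F J' = mixnorm r' n m d F J'" for J'
    using Suc.prems by (intro Suc.IH) auto
  ultimately show ?case by simp
qed simp

lemma mixnorm_cong:
  assumes "d \<le> m"
    and "\<And>J'. \<forall>l. m - d < l \<and> l \<le> m \<longrightarrow> J' l \<in> {1..n} \<Longrightarrow>
      \<forall>l. \<not> (m - d < l \<and> l \<le> m) \<longrightarrow> J' l = J l \<Longrightarrow> F J' = F' J'"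
  shows "mixnorm r n m d F J = mixnorm r n m d F' J"
  using assms
proof (induction d arbitrary: J)
  case 0
  then show ?case by auto
next
  case (Suc d)
  have "mixnorm r n m d F (J(m - d := j)) = mixnorm r n m d F' (J(m - d := j))"
    if j: "j \<in> {1..n}" for j
  proof (rule Suc.IH)
    fix J' assume in_box: "\<forall>l. m - d < l \<and> l \<le> m \<longrightarrow> J' l \<in> {1..n}"
      and outside: "\<forall>l. \<not> (m - d < l \<and> l \<le> m) \<longrightarrow> J' l = (J(m - d := j)) l"
    have "J' l \<in> {1..n}" if "m - Suc d < l \<and> l \<le> m" for l
      using in_box outside that j Suc.prems(1) by (cases "l = m - d") auto
    moreover have "\<forall>l. \<not> (m - Suc d < l \<and> l \<le> m) \<longrightarrow> J' l = J l"
      using outside Suc.prems(1) by auto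
    ultimately show "F J' = F' J'" by (intro Suc.prems(2)) auto
  qed (use Suc.prems in auto)
  then show ?case by (simp add: lpnorm_cong)
qed

lemma mixnorm_mult_const:
  assumes "d \<le> m"
    and "\<forall>J j l. m - d < l \<and> l \<le> m \<longrightarrow> c (J(l := j)) = c J"
    and "\<forall>J. 0 \<le> c J"
    and "\<forall>l. m - d < l \<and> l \<le> m \<longrightarrow> r l \<ge> 1"
  shows "mixnorm r n m d (\<lambda>J. c J * F J) J = c J * mixnorm r n m d F J"
  using assms
proof (induction d arbitrary: J)
  case (Suc d)
  have IH: "mixnorm r n m d (\<lambda>J. c J * F J) J' = c J' * mixnorm r n m d F J'" for J'
    by (rule Suc.IH) (use Suc.prems in auto)
  have "m - Suc d < m - d \<and> m - d \<le> m" using Suc.prems(1) by arith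
  then have "c (J(m - d := j)) = c J" for j
    using Suc.prems(2) by blast
  then have "mixnorm r n m (Suc d) (\<lambda>J. c J * F J) J
      = lpnorm (r (m - d)) n (\<lambda>j. c J * mixnorm r n m d F (J(m - d := j)))"
    by (simp add: IH)
  also have "\<dots> = c J * mixnorm r n m (Suc d) F J"
    using Suc.prems by (simp add: lpnorm_scale)
  finally show ?case .
qed simp

lemma mixnorm_peel_level:
  assumes "k \<le> m"
    and "\<forall>J j l. k < l \<longrightarrow> c (J(l := j)) = c J" and "\<forall>J. 0 \<le> c J"
    and "\<forall>l. k < l \<and> l \<le> m \<longrightarrow> r l \<ge> 1"
  shows "mixnorm r n m (Suc (m - k)) (\<lambda>J. c J * F J) K
    = lpnorm (r k) n (\<lambda>j. c (K(k := j)) * mixnorm r n m (m - k) F (K(k := j)))"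
proof -
  have "mixnorm r n m (m - k) (\<lambda>J. c J * F J) J = c J * mixnorm r n m (m - k) F J" for J
    using assms by (intro mixnorm_mult_const) auto
  then show ?thesis using assms(1) by simp
qed

lemma sum_PiE_insert:
  assumes "a \<notin> A" "finite A"
  shows "(\<Sum>g\<in>PiE (insert a A) B. f g) = (\<Sum>y\<in>B a. \<Sum>g\<in>PiE A B. f (g(a := y)))"
proof -
  have "(\<Sum>g\<in>PiE (insert a A) B. f g) = (\<Sum>p\<in>B a \<times> PiE A B. f ((\<lambda>(y, g). g(a := y)) p))"
    unfolding PiE_insert_eq using inj_combinator[OF assms(1)] by (rule sum.reindex_cong) auto
  also have "\<dots> = (\<Sum>y\<in>B a. \<Sum>g\<in>PiE A B. f (g(a := y)))"
    by (simp add: sum.cartesian_product split_def)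
  finally show ?thesis .
qed

lemma mixnorm_powr_merge_levels:
  assumes "c \<le> m" "\<sigma> > 0" "\<forall>l. 1 \<le> l \<and> l \<le> c \<longrightarrow> r l = ereal \<sigma>" "\<forall>J. 0 \<le> F J"
  shows "mixnorm r n m m F J powr \<sigma> =
    (\<Sum>J'\<in>PiE {1..c} (\<lambda>_. {1..n}). mixnorm r n m (m - c) F (override_on J J' {1..c}) powr \<sigma>)"
  using assms
proof (induction c)
  case (Suc c)
  have "m - c = Suc (m - Suc c)" "m - (m - Suc c) = Suc c" "r (Suc c) = ereal \<sigma>"
    using Suc.prems by auto
  then have step: "mixnorm r n m (m - c) F K powr \<sigma>
      = (\<Sum>j=1..n. mixnorm r n m (m - Suc c) F (K(Suc c := j)) powr \<sigma>)" for K
    using Suc.prems by (simp add: lpnorm_powr mixnorm_nonneg)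
  have override: "(override_on J J' {1..c})(Suc c := j) = override_on J (J'(Suc c := j)) {1..Suc c}"
    for J' j by (auto simp: override_on_def)
  have "mixnorm r n m m F J powr \<sigma> =
      (\<Sum>J'\<in>PiE {1..c} (\<lambda>_. {1..n}). mixnorm r n m (m - c) F (override_on J J' {1..c}) powr \<sigma>)"
    using Suc.prems by (intro Suc.IH) auto
  also have "\<dots> = (\<Sum>j=1..n. \<Sum>J'\<in>PiE {1..c} (\<lambda>_. {1..n}).
      mixnorm r n m (m - Suc c) F (override_on J (J'(Suc c := j)) {1..Suc c}) powr \<sigma>)"
    unfolding step override by (rule sum.swap)
  also have "\<dots> = (\<Sum>J'\<in>PiE (insert (Suc c) {1..c}) (\<lambda>_. {1..n}).
      mixnorm r n m (m - Suc c) F (override_on J J' {1..Suc c}) powr \<sigma>)"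
    by (rule sum_PiE_insert[where f = "\<lambda>J'. mixnorm r n m (m - Suc c) F
      (override_on J J' {1..Suc c}) powr \<sigma>", symmetric]) auto
  also have "insert (Suc c) {1..c} = {1..Suc c}" by auto
  finally show ?case .
qed simp

lemma mixnorm_flatten:
  assumes k: "1 \<le> k" "k \<le> m" and \<sigma>: "\<sigma> > 0" "\<forall>l. 1 \<le> l \<and> l \<le> k \<longrightarrow> r l = ereal \<sigma>"
    and r: "\<forall>l. k < l \<and> l \<le> m \<longrightarrow> r l \<ge> 1"
    and c: "\<forall>J j l. k < l \<longrightarrow> c (J(l := j)) = c J" "\<forall>J. 0 \<le> c J" and F: "\<forall>J. 0 \<le> F J"
  shows "mixnorm r n m m (\<lambda>J. c J * F J) J0 =
    (\<Sum>J'\<in>PiE {1..k - 1} (\<lambda>_. {1..n}). \<Sum>j=1..n.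
      (c ((override_on J0 J' {1..k - 1})(k := j)) *
        mixnorm r n m (m - k) F ((override_on J0 J' {1..k - 1})(k := j))) powr \<sigma>) powr (1/\<sigma>)"
proof -
  have mk: "m - (k - 1) = Suc (m - k)" using k by simp
  have peel: "mixnorm r n m (Suc (m - k)) (\<lambda>J. c J * F J) K
      = lpnorm (ereal \<sigma>) n (\<lambda>j. c (K(k := j)) * mixnorm r n m (m - k) F (K(k := j)))" for K
    using mixnorm_peel_level[of k m c r n F K] k \<sigma> r c by auto
  have "mixnorm r n m m (\<lambda>J. c J * F J) J0 powr \<sigma> =
    (\<Sum>J'\<in>PiE {1..k - 1} (\<lambda>_. {1..n}).
      mixnorm r n m (m - (k - 1)) (\<lambda>J. c J * F J) (override_on J0 J' {1..k - 1}) powr \<sigma>)"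
    by (rule mixnorm_powr_merge_levels) (use k \<sigma> c F in auto)
  also have "\<dots> = (\<Sum>J'\<in>PiE {1..k - 1} (\<lambda>_. {1..n}). \<Sum>j=1..n.
      (c ((override_on J0 J' {1..k - 1})(k := j)) *
        mixnorm r n m (m - k) F ((override_on J0 J' {1..k - 1})(k := j))) powr \<sigma>)"
    unfolding mk peel using \<sigma> c F by (simp add: lpnorm_powr mixnorm_nonneg)
  finally have eq: "mixnorm r n m m (\<lambda>J. c J * F J) J0 powr \<sigma> = \<dots>" .
  have "0 \<le> mixnorm r n m m (\<lambda>J. c J * F J) J0"
    using c F by (intro mixnorm_nonneg) auto
  then have "mixnorm r n m m (\<lambda>J. c J * F J) J0
      = (mixnorm r n m m (\<lambda>J. c J * F J) J0 powr \<sigma>) powr (1/\<sigma>)"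
    using \<sigma> by (simp add: powr_powr)
  then show ?thesis unfolding eq .
qed

subsection \<open>Removing the weights level by level\<close>

definition weighted_mixnorm_bound ::
  "(nat \<Rightarrow> ereal) \<Rightarrow> (nat \<Rightarrow> ereal) \<Rightarrow> nat \<Rightarrow> nat \<Rightarrow> ((nat \<Rightarrow> nat) \<Rightarrow> real) \<Rightarrow> (nat \<Rightarrow> nat)
    \<Rightarrow> real \<Rightarrow> nat \<Rightarrow> bool" where
  "weighted_mixnorm_bound s t n m a J0 B k \<longleftrightarrow> (\<forall>\<Lambda>. (\<forall>l j. 0 \<le> \<Lambda> l j) \<longrightarrow>
     mixnorm (\<lambda>l. if l \<le> k then s k else s l) n m m (\<lambda>J. (\<Prod>l\<in>{1..<k}. \<Lambda> l (J l)) * a J) J0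
       \<le> B * (\<Prod>l\<in>{1..<k}. lpnorm (t l) n (\<Lambda> l)))"

text \<open>Here \<open>u 1 = \<infinity>\<close> is allowed, so the levels cannot be merged into one sum.\<close>
lemma mixnorm_remove_first_weight:
  assumes m: "1 \<le> m"
    and u: "u 1 \<ge> 1" "\<forall>l. 1 < l \<and> l \<le> m \<longrightarrow> u l \<ge> 1"
    and u': "u' 1 = ereal \<sigma>'" "\<sigma>' \<ge> 1" "\<forall>l. 1 < l \<and> l \<le> m \<longrightarrow> u' l = u l"
    and t: "t \<ge> 1" and e: "1 / \<sigma>' = einv (u 1) + einv t"
    and a: "\<forall>J. 0 \<le> a J" and B: "B \<ge> 0"
    and hyp: "\<And>\<mu>. \<forall>j. 0 \<le> \<mu> j \<Longrightarrow> mixnorm u' n m m (\<lambda>J. \<mu> (J 1) * a J) J0 \<le> B * lpnorm t n \<mu>"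
  shows "mixnorm u n m m a J0 \<le> B"
proof -
  define G where "G = (\<lambda>j. mixnorm u n m (m - 1) a (J0(1 := j)))"
  have mm: "m = Suc (m - 1)" using m by simp
  have inner: "mixnorm u' n m (m - 1) a K = mixnorm u n m (m - 1) a K" for K
    using u' by (intro mixnorm_cong_exponents) auto
  have "lpnorm (u 1) n G \<le> B"
  proof (rule lpnorm_le_by_duality[OF u'(2) u(1) t e _ B])
    show "\<forall>j\<in>{1..n}. 0 \<le> G j" using a by (simp add: G_def mixnorm_nonneg)
    fix \<mu> :: "nat \<Rightarrow> real" assume \<mu>: "\<forall>j. 0 \<le> \<mu> j"
    have "mixnorm u' n m (Suc (m - 1)) (\<lambda>J. \<mu> (J 1) * a J) J0
        = lpnorm (u' 1) n (\<lambda>j. \<mu> ((J0(1 := j)) 1) * mixnorm u' n m (m - 1) a (J0(1 := j)))"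
      by (rule mixnorm_peel_level) (use m \<mu> u u' in auto)
    also have "\<dots> = lpnorm (ereal \<sigma>') n (\<lambda>j. \<mu> j * G j)"
      unfolding inner G_def u'(1) by simp
    finally show "lpnorm (ereal \<sigma>') n (\<lambda>j. \<mu> j * G j) \<le> B * lpnorm t n \<mu>"
      using hyp[OF \<mu>] unfolding mm[symmetric] by simp
  qed
  moreover have "mixnorm u n m m a J0 = lpnorm (u 1) n G"
    using mixnorm.simps(2)[of u n m "m - 1" a J0] m by (simp add: G_def)
  ultimately show ?thesis by simp
qed

text \<open>The finite common exponent of the levels \<open>1, \<dots>, k\<close> lets them merge into one
  sum over index tuples.\<close>
lemma mixnorm_remove_weight:
  assumes k: "1 \<le> k" "k \<le> m"
    and u: "\<forall>l. 1 \<le> l \<and> l \<le> k \<longrightarrow> u l = ereal \<sigma>" "\<forall>l. k < l \<and> l \<le> m \<longrightarrow> u l \<ge> 1"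
    and u': "\<forall>l. 1 \<le> l \<and> l \<le> k \<longrightarrow> u' l = ereal \<sigma>'" "\<forall>l. k < l \<and> l \<le> m \<longrightarrow> u' l = u l"
    and \<sigma>: "\<sigma> \<ge> 1" "\<sigma>' \<ge> 1" and t: "t \<ge> 1" and e: "1 / \<sigma>' = 1 / \<sigma> + einv t"
    and W: "\<forall>J. 0 \<le> W J" "\<And>J l j. k \<le> l \<Longrightarrow> W (J(l := j)) = W J"
    and a: "\<forall>J. 0 \<le> a J" and B: "B \<ge> 0"
    and hyp: "\<And>\<mu>. \<forall>j. 0 \<le> \<mu> j \<Longrightarrow>
      mixnorm u' n m m (\<lambda>J. (W J * \<mu> (J k)) * a J) J0 \<le> B * lpnorm t n \<mu>"
  shows "mixnorm u n m m (\<lambda>J. W J * a J) J0 \<le> B"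
proof -
  have "1 / \<sigma> \<le> 1 / \<sigma>'" using e einv_nonneg[OF t] by simp
  then have "\<sigma>' \<le> \<sigma>" using \<sigma> by (simp add: field_simps)
  define P where "P = PiE {1..k - 1} (\<lambda>_. {1..n})"
  define ov where "ov = (\<lambda>J'. override_on J0 J' {1..k - 1})"
  define V where "V = (\<lambda>j J'. W ((ov J')(k := j)) * mixnorm u n m (m - k) a ((ov J')(k := j)))"
  have inner: "mixnorm u' n m (m - k) a K = mixnorm u n m (m - k) a K" for K
    using k u' by (intro mixnorm_cong_exponents) auto
  have "mixnorm u n m m (\<lambda>J. W J * a J) J0 = (\<Sum>J'\<in>P. \<Sum>j=1..n. V j J' powr \<sigma>) powr (1/\<sigma>)"
    unfolding P_def V_def ov_def
    by (rule mixnorm_flatten[OF k _ u]) (use \<sigma> W a in auto)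
  also have "\<dots> \<le> B"
  proof (rule flattened_le_by_duality[of P V \<sigma>' \<sigma> t])
    fix \<mu> :: "nat \<Rightarrow> real" assume \<mu>: "\<forall>j. 0 \<le> \<mu> j"
    have "mixnorm u' n m m (\<lambda>J. (W J * \<mu> (J k)) * a J) J0
        = (\<Sum>J'\<in>P. \<Sum>j=1..n. ((W ((ov J')(k := j)) * \<mu> (((ov J')(k := j)) k)) *
            mixnorm u' n m (m - k) a ((ov J')(k := j))) powr \<sigma>') powr (1/\<sigma>')"
      unfolding P_def ov_def
      by (rule mixnorm_flatten[OF k _ u'(1)]) (use \<sigma> W a \<mu> u u' in auto)
    also have "\<dots> = (\<Sum>J'\<in>P. \<Sum>j=1..n. (\<mu> j * V j J') powr \<sigma>') powr (1/\<sigma>')"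
      by (simp add: V_def inner mult_ac)
    finally show "(\<Sum>J'\<in>P. \<Sum>j=1..n. (\<mu> j * V j J') powr \<sigma>') powr (1/\<sigma>') \<le> B * lpnorm t n \<mu>"
      using hyp[OF \<mu>] by simp
  qed (use W a \<sigma> \<open>\<sigma>' \<le> \<sigma>\<close> t B e in \<open>auto simp: P_def V_def finite_PiE mixnorm_nonneg\<close>)
  finally show ?thesis .
qed

lemma weighted_mixnorm_bound_SucD:
  assumes "1 \<le> k" "weighted_mixnorm_bound s t n m a J0 B (Suc k)"
    and "\<forall>l j. 0 \<le> \<Lambda> l j" "\<forall>j. 0 \<le> \<mu> j"
  shows "mixnorm (\<lambda>l. if l \<le> Suc k then s (Suc k) else s l) n m m
      (\<lambda>J. ((\<Prod>l\<in>{1..<k}. \<Lambda> l (J l)) * \<mu> (J k)) * a J) J0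
    \<le> B * (\<Prod>l\<in>{1..<k}. lpnorm (t l) n (\<Lambda> l)) * lpnorm (t k) n \<mu>"
proof -
  have prod_upd: "(\<Prod>l\<in>{1..<Suc k}. f l ((\<Lambda>(k := \<mu>)) l)) = (\<Prod>l\<in>{1..<k}. f l (\<Lambda> l)) * f k \<mu>"
    for f :: "nat \<Rightarrow> (nat \<Rightarrow> real) \<Rightarrow> real"
  proof -
    have "(\<Prod>l\<in>{1..<k}. f l ((\<Lambda>(k := \<mu>)) l)) = (\<Prod>l\<in>{1..<k}. f l (\<Lambda> l))"
      by (intro prod.cong) auto
    then show ?thesis using assms(1) by (simp add: prod.op_ivl_Suc)
  qed
  from prod_upd[of "\<lambda>l x. x (_ l)"] prod_upd[of "\<lambda>l x. lpnorm (t l) n x"]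
  have prods: "(\<Prod>l\<in>{1..<Suc k}. (\<Lambda>(k := \<mu>)) l (J l)) = (\<Prod>l\<in>{1..<k}. \<Lambda> l (J l)) * \<mu> (J k)"
    "(\<Prod>l\<in>{1..<Suc k}. lpnorm (t l) n ((\<Lambda>(k := \<mu>)) l))
      = (\<Prod>l\<in>{1..<k}. lpnorm (t l) n (\<Lambda> l)) * lpnorm (t k) n \<mu>" for J
    by simp_all
  have "\<forall>l j. 0 \<le> (\<Lambda>(k := \<mu>)) l j" using assms(3,4) by auto
  with assms(2) have "mixnorm (\<lambda>l. if l \<le> Suc k then s (Suc k) else s l) n m m
      (\<lambda>J. (\<Prod>l\<in>{1..<Suc k}. (\<Lambda>(k := \<mu>)) l (J l)) * a J) J0
    \<le> B * (\<Prod>l\<in>{1..<Suc k}. lpnorm (t l) n ((\<Lambda>(k := \<mu>)) l))"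
    unfolding weighted_mixnorm_bound_def by blast
  then show ?thesis by (simp only: prods mult.assoc)
qed

lemma weighted_mixnorm_bound_step:
  assumes k: "1 \<le> k" "k \<le> m"
    and a: "\<forall>J. 0 \<le> a J"
    and s: "\<forall>k\<in>{1..Suc m}. s k \<ge> 1" and t: "\<forall>k\<in>{1..m}. t k \<ge> 1"
    and rel: "\<forall>k\<in>{1..m}. einv (s (Suc k)) = einv (s k) + einv (t k)"
    and fin: "\<forall>k\<in>{2..Suc m}. s k \<noteq> \<infinity>"
    and B: "B \<ge> 0"
    and bound: "weighted_mixnorm_bound s t n m a J0 B (Suc k)"
  shows "weighted_mixnorm_bound s t n m a J0 B k"
  unfolding weighted_mixnorm_bound_def
proof (intro allI impI)
  fix \<Lambda> :: "nat \<Rightarrow> nat \<Rightarrow> real" assume \<Lambda>: "\<forall>l j. 0 \<le> \<Lambda> l j"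
  define W where "W = (\<lambda>J. \<Prod>l\<in>{1..<k}. \<Lambda> l (J l))"
  define Bk where "Bk = B * (\<Prod>l\<in>{1..<k}. lpnorm (t l) n (\<Lambda> l))"
  have "s (Suc k) \<ge> 1" "s (Suc k) \<noteq> \<infinity>" using s fin k by auto
  then obtain \<sigma>' where \<sigma>': "s (Suc k) = ereal \<sigma>'" "\<sigma>' \<ge> 1"
    by (cases rule: ereal_ge1_cases) auto
  have "einv (s (Suc k)) = einv (s k) + einv (t k)" using rel k by auto
  then have e: "1 / \<sigma>' = einv (s k) + einv (t k)" using \<sigma>' by simp
  have hyp: "mixnorm (\<lambda>l. if l \<le> Suc k then s (Suc k) else s l) n m m
      (\<lambda>J. (W J * \<mu> (J k)) * a J) J0 \<le> Bk * lpnorm (t k) n \<mu>" if "\<forall>j. 0 \<le> \<mu> j" for \<mu>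
    using weighted_mixnorm_bound_SucD[OF k(1) bound \<Lambda> that] by (simp add: W_def Bk_def)
  have "mixnorm (\<lambda>l. if l \<le> k then s k else s l) n m m (\<lambda>J. W J * a J) J0 \<le> Bk"
  proof (cases "k = 1")
    case True
    then have "W = (\<lambda>_. 1)" by (simp add: W_def)
    with hyp have "mixnorm (\<lambda>l. if l \<le> Suc k then s (Suc k) else s l) n m m (\<lambda>J. \<mu> (J k) * a J) J0
        \<le> Bk * lpnorm (t k) n \<mu>" if "\<forall>j. 0 \<le> \<mu> j" for \<mu>
      using that by simp
    then have "mixnorm (\<lambda>l. if l \<le> k then s k else s l) n m m a J0 \<le> Bk"
      unfolding True by (rule mixnorm_remove_first_weight[rotated -1])
        (use True k s t B \<sigma>' e a in \<open>auto simp: Bk_def lpnorm_nonneg prod_nonneg le_Suc_eq\<close>)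
    with \<open>W = (\<lambda>_. 1)\<close> True show ?thesis by simp
  next
    case False
    with k fin s have "s k \<ge> 1" "s k \<noteq> \<infinity>" by auto
    then obtain \<sigma> where \<sigma>: "s k = ereal \<sigma>" "\<sigma> \<ge> 1"
      by (cases rule: ereal_ge1_cases) auto
    show ?thesis
      by (rule mixnorm_remove_weight[rotated -1, OF hyp])
        (use k s t B \<sigma>' \<sigma> e \<Lambda> a in \<open>auto simp: W_def Bk_def lpnorm_nonneg prod_nonneg le_Suc_eq\<close>)
  qed
  then show "mixnorm (\<lambda>l. if l \<le> k then s k else s l) n m m
      (\<lambda>J. (\<Prod>l\<in>{1..<k}. \<Lambda> l (J l)) * a J) J0 \<le> B * (\<Prod>l\<in>{1..<k}. lpnorm (t l) n (\<Lambda> l))"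
    by (simp add: W_def Bk_def)
qed

lemma mixnorm_le_by_weighted_bound:
  assumes a: "\<forall>J. 0 \<le> a J"
    and s: "\<forall>k\<in>{1..Suc m}. s k \<ge> 1" and t: "\<forall>k\<in>{1..m}. t k \<ge> 1"
    and rel: "\<forall>k\<in>{1..m}. einv (s (Suc k)) = einv (s k) + einv (t k)"
    and fin: "\<forall>k\<in>{2..Suc m}. s k \<noteq> \<infinity>"
    and B: "B \<ge> 0"
    and weighted: "\<And>\<Lambda>. \<forall>l j. 0 \<le> \<Lambda> l j \<Longrightarrow>
       mixnorm (\<lambda>_. s (Suc m)) n m m (\<lambda>J. (\<Prod>l\<in>{1..m}. \<Lambda> l (J l)) * a J) J0
         \<le> B * (\<Prod>l\<in>{1..m}. lpnorm (t l) n (\<Lambda> l))"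
  shows "mixnorm s n m m a J0 \<le> B"
proof -
  have top: "weighted_mixnorm_bound s t n m a J0 B (Suc m)"
    unfolding weighted_mixnorm_bound_def
  proof (intro allI impI)
    fix \<Lambda> :: "nat \<Rightarrow> nat \<Rightarrow> real" assume "\<forall>l j. 0 \<le> \<Lambda> l j"
    moreover have "mixnorm (\<lambda>l. if l \<le> Suc m then s (Suc m) else s l) n m m F J0
        = mixnorm (\<lambda>_. s (Suc m)) n m m F J0" for F
      by (rule mixnorm_cong_exponents) auto
    ultimately show "mixnorm (\<lambda>l. if l \<le> Suc m then s (Suc m) else s l) n m m
        (\<lambda>J. (\<Prod>l\<in>{1..<Suc m}. \<Lambda> l (J l)) * a J) J0
        \<le> B * (\<Prod>l\<in>{1..<Suc m}. lpnorm (t l) n (\<Lambda> l))"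
      using weighted by (simp add: atLeastLessThanSuc_atLeastAtMost)
  qed
  have "weighted_mixnorm_bound s t n m a J0 B 1"
    using inc_induct[of 1 "Suc m" "weighted_mixnorm_bound s t n m a J0 B"] top
      weighted_mixnorm_bound_step[OF _ _ a s t rel fin B] by auto
  from this[unfolded weighted_mixnorm_bound_def, rule_format, of "\<lambda>_ _. 1"]
  have "mixnorm (\<lambda>l. if l \<le> 1 then s 1 else s l) n m m a J0 \<le> B"
    by simp
  moreover have "mixnorm (\<lambda>l. if l \<le> 1 then s 1 else s l) n m m a J0 = mixnorm s n m m a J0"
    by (rule mixnorm_cong_exponents) (auto simp: le_Suc_eq)
  ultimately show ?thesis by simp
qed

subsection \<open>Weak norms and multilinear maps\<close>

lemma of_real_in_scalar_field: "is_scalar_field K \<Longrightarrow> complex_of_real a \<in> K"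
  by (auto simp: is_scalar_field_def)

lemma zero_in_dual_ball: "is_scalar_field K \<Longrightarrow> (\<lambda>_. 0) \<in> dual_ball K sm V"
  using of_real_in_scalar_field[of K 0] by (simp add: dual_ball_def)

lemma lpnorm_dual_ball_le_wnorm:
  assumes "\<phi> \<in> dual_ball K sm V" "\<forall>j\<in>{1..n}. x j \<in> V" "p \<ge> 1"
  shows "lpnorm p n (\<lambda>j. cmod (\<phi> (x j))) \<le> wnorm K sm V p n x"
  unfolding wnorm_def
proof (rule cSup_upper)
  have "lpnorm p n (\<lambda>j. cmod (\<psi> (x j))) \<le> lpnorm p n (\<lambda>j. norm (x j))"
    if "\<psi> \<in> dual_ball K sm V" for \<psi>
    using that assms(2,3) by (intro lpnorm_mono) (auto simp: dual_ball_def)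
  then show "bdd_above ((\<lambda>\<phi>. lpnorm p n (\<lambda>j. cmod (\<phi> (x j)))) ` dual_ball K sm V)"
    by (intro bdd_aboveI2) blast
qed (use assms(1) in blast)

lemma wnorm_nonneg:
  assumes "is_scalar_field K" "\<forall>j\<in>{1..n}. x j \<in> V" "p \<ge> 1"
  shows "0 \<le> wnorm K sm V p n x"
  using lpnorm_dual_ball_le_wnorm[OF zero_in_dual_ball[OF assms(1)] assms(2,3)] lpnorm_nonneg order_trans
  by blast

lemma wnorm_weighted_le:
  assumes K: "is_scalar_field K"
    and x: "\<forall>j\<in>{1..n}. x j \<in> V" and w: "\<forall>j. 0 \<le> w j"
    and p: "p \<ge> 1" and t: "t \<ge> 1" and q: "q \<ge> 1" and e: "einv p = einv t + einv q"
  shows "wnorm K sm V p n (\<lambda>j. sm (complex_of_real (w j)) (x j)) \<le> lpnorm t n w * wnorm K sm V q n x"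
  unfolding wnorm_def[of K sm V p]
proof (rule cSup_least)
  show "(\<lambda>\<phi>. lpnorm p n (\<lambda>j. cmod (\<phi> (sm (complex_of_real (w j)) (x j))))) ` dual_ball K sm V \<noteq> {}"
    using zero_in_dual_ball[OF K] by blast
next
  fix y assume "y \<in> (\<lambda>\<phi>. lpnorm p n (\<lambda>j. cmod (\<phi> (sm (complex_of_real (w j)) (x j))))) ` dual_ball K sm V"
  then obtain \<phi> where \<phi>: "\<phi> \<in> dual_ball K sm V"
    and y: "y = lpnorm p n (\<lambda>j. cmod (\<phi> (sm (complex_of_real (w j)) (x j))))" by blast
  have "\<phi> (sm (complex_of_real (w j)) (x j)) = complex_of_real (w j) * \<phi> (x j)" if "j \<in> {1..n}" for j
    using \<phi> x that of_real_in_scalar_field[OF K] by (auto simp: dual_ball_def)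
  then have "y = lpnorm p n (\<lambda>j. w j * cmod (\<phi> (x j)))"
    unfolding y using w by (intro lpnorm_cong) (simp add: norm_mult)
  also have "\<dots> \<le> lpnorm t n w * lpnorm q n (\<lambda>j. cmod (\<phi> (x j)))"
    by (rule lpnorm_holder[OF p t q e])
  also have "\<dots> \<le> lpnorm t n w * wnorm K sm V q n x"
    by (intro mult_left_mono lpnorm_dual_ball_le_wnorm[OF \<phi> x q] lpnorm_nonneg)
  finally show "y \<le> lpnorm t n w * wnorm K sm V q n x" .
qed

lemma multilinear_on_norm_scale:
  assumes T: "multilinear_on K smX smY m V T" and KY: "K_space K smY"
    and z: "z \<in> PiE {1..m} V" and c: "\<forall>k\<in>{1..m}. c k \<in> K"
    and cz: "\<forall>k\<in>{1..m}. smX (c k) (z k) \<in> V k"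
  shows "norm (T (\<lambda>k\<in>{1..m}. smX (c k) (z k))) = (\<Prod>k\<in>{1..m}. cmod (c k)) * norm (T z)"
proof -
  define w where "w = (\<lambda>S. \<lambda>k\<in>{1..m}. if k \<in> S then smX (c k) (z k) else z k)"
  have "w S \<in> PiE {1..m} V \<and> norm (T (w S)) = (\<Prod>k\<in>S. cmod (c k)) * norm (T z)"
    if "finite S" "S \<subseteq> {1..m}" for S
    using that
  proof (induction S rule: finite_induct)
    case empty
    have "w {} = z" using z unfolding w_def by (auto simp: PiE_def extensional_def)
    then show ?case using z by simp
  next
    case (insert a S)
    then have wS: "w S \<in> PiE {1..m} V" and a: "a \<in> {1..m}" by auto
    have "w (insert a S) = (w S)(a := smX (c a) (w S a))"
      using insert.hyps a unfolding w_def by (auto simp: fun_eq_iff)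
    then have "T (w (insert a S)) = smY (c a) (T (w S))"
      using T wS a c by (auto simp: multilinear_on_def)
    then have "norm (T (w (insert a S))) = cmod (c a) * norm (T (w S))"
      using KY c a by (auto simp: K_space_def)
    moreover have "w (insert a S) \<in> PiE {1..m} V"
      using z cz unfolding w_def by (auto simp: PiE_def Pi_def)
    ultimately show ?case using insert by simp
  qed
  moreover have "w {1..m} = (\<lambda>k\<in>{1..m}. smX (c k) (z k))"
    unfolding w_def by (intro restrict_ext) auto
  ultimately show ?thesis by (metis finite_atLeastAtMost order_refl)
qed

text \<open>Scaling the \<open>k\<close>-th sequence by the weight \<open>\<Lambda> k\<close> in the \<open>(r;p)\<close>-summing inequality.\<close>
lemma summing_const_weighted_bound:
  assumes K: "is_scalar_field K" and KY: "K_space K smY"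
    and V: "\<forall>k\<in>{1..m}. K_banach_subspace K smX (V k)"
    and T: "multilinear_on K smX smY m V T"
    and p: "\<forall>k\<in>{1..m}. p k \<ge> 1" and q: "\<forall>k\<in>{1..m}. q k \<ge> 1" and t: "\<forall>k\<in>{1..m}. t k \<ge> 1"
    and pq: "\<forall>k\<in>{1..m}. einv (p k) = einv (t k) + einv (q k)"
    and C: "C \<in> summing_consts K smX m V r p T"
    and x: "\<forall>k\<in>{1..m}. \<forall>j\<in>{1..n}. x k j \<in> V k" and \<Lambda>: "\<forall>l j. 0 \<le> \<Lambda> l j"
  shows "mixnorm r n m m (\<lambda>J. (\<Prod>l\<in>{1..m}. \<Lambda> l (J l)) * norm (T (\<lambda>k\<in>{1..m}. x k (J k)))) (\<lambda>_. 0)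
    \<le> C * (\<Prod>k=1..m. wnorm K smX (V k) (q k) n (x k)) * (\<Prod>l\<in>{1..m}. lpnorm (t l) n (\<Lambda> l))"
proof -
  define y where "y = (\<lambda>k j. smX (complex_of_real (\<Lambda> k j)) (x k j))"
  have y: "\<forall>k\<in>{1..m}. \<forall>j\<in>{1..n}. y k j \<in> V k"
    using x V of_real_in_scalar_field[OF K] by (auto simp: y_def K_banach_subspace_def)
  have "(\<Prod>l\<in>{1..m}. \<Lambda> l (J l)) * norm (T (\<lambda>k\<in>{1..m}. x k (J k)))
      = norm (T (\<lambda>k\<in>{1..m}. y k (J k)))" if J: "\<forall>l\<in>{1..m}. J l \<in> {1..n}" for J
  proof -
    define z where "z = (\<lambda>k\<in>{1..m}. x k (J k))"
    have "z \<in> PiE {1..m} V" using J x by (auto simp: z_def)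
    then have "norm (T (\<lambda>k\<in>{1..m}. smX (complex_of_real (\<Lambda> k (J k))) (z k)))
        = (\<Prod>k\<in>{1..m}. cmod (complex_of_real (\<Lambda> k (J k)))) * norm (T z)"
      by (rule multilinear_on_norm_scale[OF T KY])
        (use of_real_in_scalar_field[OF K] y J in \<open>auto simp: z_def y_def\<close>)
    moreover have "(\<lambda>k\<in>{1..m}. smX (complex_of_real (\<Lambda> k (J k))) (z k)) = (\<lambda>k\<in>{1..m}. y k (J k))"
      by (intro restrict_ext) (simp add: z_def y_def)
    moreover have "(\<Prod>k\<in>{1..m}. cmod (complex_of_real (\<Lambda> k (J k)))) = (\<Prod>k\<in>{1..m}. \<Lambda> k (J k))"
      using \<Lambda> by (intro prod.cong) auto
    ultimately show ?thesis by (simp add: z_def)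
  qed
  then have "mixnorm r n m m (\<lambda>J. (\<Prod>l\<in>{1..m}. \<Lambda> l (J l)) * norm (T (\<lambda>k\<in>{1..m}. x k (J k)))) (\<lambda>_. 0)
      = mixnorm r n m m (\<lambda>J. norm (T (\<lambda>k\<in>{1..m}. y k (J k)))) (\<lambda>_. 0)"
    by (intro mixnorm_cong) auto
  also have "\<dots> \<le> C * (\<Prod>k=1..m. wnorm K smX (V k) (p k) n (y k))"
    using C y unfolding summing_consts_def by blast
  also have "\<dots> \<le> C * (\<Prod>k=1..m. lpnorm (t k) n (\<Lambda> k) * wnorm K smX (V k) (q k) n (x k))"
    using C y p q t pq x \<Lambda> unfolding y_def
    by (intro mult_left_mono prod_mono conjI wnorm_nonneg[OF K] wnorm_weighted_le[OF K])
      (auto simp: summing_consts_def)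
  finally show ?thesis
    by (simp add: prod.distrib mult_ac)
qed

subsection \<open>The exponents\<close>

lemma extended_exponent_chain:
  assumes s: "\<forall>k\<in>{1..m}. einv (s k) - invsum_from q m k = 1 / r - invsum_from p m k"
    and pq: "\<forall>k\<in>{1..m}. einv (p k) = einv (t k) + einv (q k)"
  shows "\<forall>k\<in>{1..m}. einv ((s(Suc m := ereal r)) (Suc k)) = einv ((s(Suc m := ereal r)) k) + einv (t k)"
proof
  fix k assume k: "k \<in> {1..m}"
  have split: "invsum_from f m k = einv (f k) + invsum_from f m (Suc k)" for f
    using k by (simp add: invsum_from_def sum.atLeast_Suc_atMost)
  have "einv ((s(Suc m := ereal r)) (Suc k)) = 1 / r - invsum_from p m (Suc k) + invsum_from q m (Suc k)"
  proof (cases "k = m")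
    case False
    with k have "einv (s (Suc k)) - invsum_from q m (Suc k) = 1 / r - invsum_from p m (Suc k)"
      using s by auto
    with False show ?thesis by simp
  qed (simp add: invsum_from_def)
  moreover have "einv (s k) = 1 / r - invsum_from p m k + invsum_from q m k"
    using s k by force
  moreover have "einv (p k) = einv (t k) + einv (q k)" using pq k by blast
  ultimately show "einv ((s(Suc m := ereal r)) (Suc k)) = einv ((s(Suc m := ereal r)) k) + einv (t k)"
    using k split[of p] split[of q] by simp
qed

lemma reciprocal_chain_finite:
  assumes t: "\<forall>k\<in>{1..m}. t k \<ge> 1"
    and rel: "\<forall>k\<in>{1..m}. einv (s (Suc k)) = einv (s k) + einv (t k)"
    and pos: "einv (s 2) > 0"
  shows "\<forall>k\<in>{2..Suc m}. s k \<noteq> \<infinity>"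
proof
  fix k assume k: "k \<in> {2..Suc m}"
  have "2 \<le> k" using k by simp
  then have "k \<le> Suc m \<longrightarrow> einv (s 2) \<le> einv (s k)"
  proof (induction rule: dec_induct)
    case (step i)
    then show ?case using rel t einv_nonneg[of "t i"] by force
  qed simp
  then show "s k \<noteq> \<infinity>" using pos k by auto
qed

lemma inclusion_exponents:
  fixes p q s :: "nat \<Rightarrow> ereal" and r :: real
  assumes m: "m \<ge> 1" and p: "\<forall>k\<in>{1..m}. p k \<ge> 1"
    and cases:
      "((\<forall>k\<in>{1..m}. q k \<ge> p k) \<and> 1 / r - invsum_from p m 1 + invsum_from q m 1 > 0) \<or>
       ((\<forall>k\<in>{2..m}. q k \<ge> p k) \<and> q 1 > p 1 \<and> 1 / r - invsum_from p m 1 + invsum_from q m 1 \<ge> 0)"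
    and s: "\<forall>k\<in>{1..m}. einv (s k) - invsum_from q m k = 1 / r - invsum_from p m k"
  obtains t where "\<forall>k\<in>{1..m}. t k \<ge> 1" "\<forall>k\<in>{1..m}. einv (p k) = einv (t k) + einv (q k)"
    "\<forall>k\<in>{1..m}. einv ((s(Suc m := ereal r)) (Suc k)) = einv ((s(Suc m := ereal r)) k) + einv (t k)"
    "\<forall>k\<in>{2..Suc m}. (s(Suc m := ereal r)) k \<noteq> \<infinity>"
proof -
  have "q k \<ge> p k" if "k \<in> {1..m}" for k
    using cases that by (cases "k = 1") auto
  then have "\<forall>k\<in>{1..m}. \<exists>t. t \<ge> 1 \<and> einv (p k) = einv t + einv (q k)"
    using einv_gap p by metis
  then obtain t where t: "\<forall>k\<in>{1..m}. t k \<ge> 1" and pq: "\<forall>k\<in>{1..m}. einv (p k) = einv (t k) + einv (q k)"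
    by metis
  note rel = extended_exponent_chain[OF s pq]
  have "einv ((s(Suc m := ereal r)) 2) = einv (s 1) + einv (t 1)"
    using rel m by (auto simp: numeral_2_eq_2)
  moreover have "einv (s 1) + einv (t 1) > 0"
  proof -
    have s1: "einv (s 1) = 1 / r - invsum_from p m 1 + invsum_from q m 1"
      using s m by force
    have "einv (t 1) \<ge> 0" using t m einv_nonneg by auto
    moreover have "einv (t 1) > 0" if "q 1 > p 1"
      using einv_strict_antimono[OF _ that] p pq m by force
    ultimately show ?thesis using cases s1 by auto
  qed
  ultimately have "einv ((s(Suc m := ereal r)) 2) > 0" by simp
  with t rel have "\<forall>k\<in>{2..Suc m}. (s(Suc m := ereal r)) k \<noteq> \<infinity>"
    by (rule reciprocal_chain_finite)
  with t pq rel show ?thesis by (rule that)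
qed

lemma summing_consts_subset:
  assumes K: "is_scalar_field K" and KY: "K_space K smY"
    and V: "\<forall>k\<in>{1..m}. K_banach_subspace K smX (V k)"
    and T: "multilinear_on K smX smY m V T"
    and r: "r \<ge> 1" and p: "\<forall>k\<in>{1..m}. p k \<ge> 1" and q: "\<forall>k\<in>{1..m}. q k \<ge> 1"
    and s: "\<forall>k\<in>{1..m}. s k \<ge> 1" and t: "\<forall>k\<in>{1..m}. t k \<ge> 1"
    and pq: "\<forall>k\<in>{1..m}. einv (p k) = einv (t k) + einv (q k)"
    and rel: "\<forall>k\<in>{1..m}. einv ((s(Suc m := ereal r)) (Suc k)) = einv ((s(Suc m := ereal r)) k) + einv (t k)"
    and fin: "\<forall>k\<in>{2..Suc m}. (s(Suc m := ereal r)) k \<noteq> \<infinity>"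
  shows "summing_consts K smX m V (\<lambda>_. ereal r) p T \<subseteq> summing_consts K smX m V s q T"
proof
  fix C assume C: "C \<in> summing_consts K smX m V (\<lambda>_. ereal r) p T"
  have "mixnorm s n m m (\<lambda>J. norm (T (\<lambda>k\<in>{1..m}. x k (J k)))) (\<lambda>_. 0)
      \<le> C * (\<Prod>k=1..m. wnorm K smX (V k) (q k) n (x k))"
    if x: "\<forall>k\<in>{1..m}. \<forall>j\<in>{1..n}. x k j \<in> V k" for n x
  proof -
    have "C * (\<Prod>k=1..m. wnorm K smX (V k) (q k) n (x k)) \<ge> 0"
      using C x q by (intro mult_nonneg_nonneg prod_nonneg)
        (auto simp: summing_consts_def intro!: wnorm_nonneg[OF K])
    moreover have "\<forall>k\<in>{1..Suc m}. (s(Suc m := ereal r)) k \<ge> 1" using s r by auto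
    ultimately have "mixnorm (s(Suc m := ereal r)) n m m (\<lambda>J. norm (T (\<lambda>k\<in>{1..m}. x k (J k)))) (\<lambda>_. 0)
        \<le> C * (\<Prod>k=1..m. wnorm K smX (V k) (q k) n (x k))"
      using summing_const_weighted_bound[OF K KY V T p q t pq C x]
      by (intro mixnorm_le_by_weighted_bound[OF _ _ t rel fin]) auto
    moreover have "mixnorm (s(Suc m := ereal r)) n m m F J = mixnorm s n m m F J" for F J
      by (rule mixnorm_cong_exponents) auto
    ultimately show ?thesis by simp
  qed
  then show "C \<in> summing_consts K smX m V s q T"
    using C unfolding summing_consts_def by blast
qed

theorem theorem3:
  fixes K :: "complex set"
    and smX :: "complex \<Rightarrow> 'a::banach \<Rightarrow> 'a"
    and smY :: "complex \<Rightarrow> 'b::banach \<Rightarrow> 'b"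
    and V :: "nat \<Rightarrow> 'a set"
    and m :: nat and r :: real
    and p q s :: "nat \<Rightarrow> ereal"
    and T :: "(nat \<Rightarrow> 'a) \<Rightarrow> 'b"
  assumes K: "is_scalar_field K"
    and KX: "K_space K smX" and KY: "K_space K smY"
    and V: "\<forall>k\<in>{1..m}. K_banach_subspace K smX (V k)"
    and m: "m \<ge> 1" and r: "r \<ge> 1"
    and p: "\<forall>k\<in>{1..m}. p k \<ge> 1" and q: "\<forall>k\<in>{1..m}. q k \<ge> 1"
    and cases:
      "((\<forall>k\<in>{1..m}. q k \<ge> p k) \<and> 1 / r - invsum_from p m 1 + invsum_from q m 1 > 0) \<or>
       ((\<forall>k\<in>{2..m}. q k \<ge> p k) \<and> q 1 > p 1 \<and> 1 / r - invsum_from p m 1 + invsum_from q m 1 \<ge> 0)"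
    and s_def: "\<forall>k\<in>{1..m}. einv (s k) - invsum_from q m k = 1 / r - invsum_from p m k"
    and s: "\<forall>k\<in>{1..m}. s k \<ge> 1"
    and T: "multiple_summing K smX smY m V (\<lambda>_. ereal r) p T"
  shows "multiple_summing K smX smY m V s q T \<and>
         pi_norm K smX m V s q T \<le> pi_norm K smX m V (\<lambda>_. ereal r) p T"
proof -
  obtain t where "\<forall>k\<in>{1..m}. t k \<ge> 1" "\<forall>k\<in>{1..m}. einv (p k) = einv (t k) + einv (q k)"
    "\<forall>k\<in>{1..m}. einv ((s(Suc m := ereal r)) (Suc k)) = einv ((s(Suc m := ereal r)) k) + einv (t k)"
    "\<forall>k\<in>{2..Suc m}. (s(Suc m := ereal r)) k \<noteq> \<infinity>"
    using inclusion_exponents[OF m p cases s_def] by blast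
  moreover have "multilinear_on K smX smY m V T"
    using T by (simp add: multiple_summing_def cont_multilinear_def)
  ultimately have sub: "summing_consts K smX m V (\<lambda>_. ereal r) p T \<subseteq> summing_consts K smX m V s q T"
    using summing_consts_subset[OF K KY V _ r p q s] by blast
  have "summing_consts K smX m V (\<lambda>_. ereal r) p T \<noteq> {}"
    using T by (simp add: multiple_summing_def)
  moreover have "bdd_below (summing_consts K smX m V s q T)"
    by (rule bdd_belowI[of _ 0]) (auto simp: summing_consts_def)
  ultimately show ?thesis
    using sub T unfolding multiple_summing_def pi_norm_def
    by (auto intro: cInf_superset_mono)
qed

end
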